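(* Let $A\in\mathrm{GL}(n,2)$ have columns $\mathbf{a}_1,\dots,\mathbf{a}_n$, let $\rho$ be an $n$-qubit state, let $\varepsilon>0$ and $\delta\in(0,1)$. For each $i\in\{1,\dots,n\}$, let $Y_{i,1},\dots,Y_{i,m_i}\in\{0,1\}$ be the recorded outcomes of $m_i$ measurements of the stabilizer $g(\mathbf{a}_i)$ on independent copies of $\rho$ ($Y_{i,j}=1$ for outcome $+1$, $0$ for outcome $-1$), all $Y_{i,j}$ being mutually independent with $\mathbb{E}[Y_{i,j}]=a_i:=\frac{1+\mu_\rho(\mathbf{a}_i)}{2}$. Let $\widehat a_i=\frac1{m_i}\sum_{j=1}^{m_i}Y_{i,j}$ and $\widehat U_A=\min_{i}\widehat a_i$. If $$m_i\ge\left\lceil\frac{\log(2n/\delta)}{2\varepsilon^2}\right\rceil\quad\text{for all } i,$$ then with probability at least $1-\delta$, $|\widehat U_A-F_{\max}(A;\rho)|\le\varepsilon$, where $F_{\max}(A;\rho)=\max\{p(\mathbf{0}): p\in\Delta(\mathbb{F}_2^n),\ \widehat p(\mathbf{a}_i)=\mu_\rho(\mathbf{a}_i)\ \forall i\}$.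
   Context: Setting: $|\psi\rangle$ is an $n$-qubit stabilizer state whose stabilizer group is generated by independent commuting Pauli operators $g_1,\dots,g_n$; for $\mathbf{u}\in\mathbb{F}_2^n$, $g(\mathbf{u})=\prod_j g_j^{u_j}$. Syndrome projectors $\Pi_{\mathbf{s}}=2^{-n}\prod_j(I+(-1)^{s_j}g_j)$, $\mathbf{s}\in\mathbb{F}_2^n$, are orthogonal rank-one projectors summing to identity with $\Pi_{\mathbf{0}}=|\psi\rangle\langle\psi|$. $p_\rho(\mathbf{s})=\mathrm{tr}(\rho\Pi_{\mathbf{s}})$; $\mu_\rho(\mathbf{u})=\mathrm{tr}(\rho g(\mathbf{u}))=\widehat{p_\rho}(\mathbf{u})$, where $\widehat p(\mathbf{u})=\sum_{\mathbf{s}}(-1)^{\mathbf{u}\cdot\mathbf{s}}p(\mathbf{s})$ (mod-2 inner product). $\Delta(\mathbb{F}_2^n)$ is the set of probability distributions on $\mathbb{F}_2^n$; $\mathrm{GL}(n,2)$ the invertible binary $n\times n$ matrices. $\log$ is the natural logarithm. *)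

theory Defs
  imports "HOL-Probability.Probability" "HOL-Library.Z2"
begin

text \<open>Vectors in F_2^n are modelled as bit^'n, with n = CARD('n).
  The mod-2 inner product u.s :\<close>
definition dot2 :: "bit^'n::finite \<Rightarrow> bit^'n \<Rightarrow> bit" where
  "dot2 u s = (\<Sum>k\<in>UNIV. u $ k * s $ k)"

definition is_distr :: "(bit^'n::finite \<Rightarrow> real) \<Rightarrow> bool" where
  "is_distr p \<longleftrightarrow> (\<forall>s. 0 \<le> p s) \<and> (\<Sum>s\<in>UNIV. p s) = 1"

definition fhat :: "(bit^'n::finite \<Rightarrow> real) \<Rightarrow> bit^'n \<Rightarrow> real" where
  "fhat p u = (\<Sum>s\<in>UNIV. (if dot2 u s = 0 then 1 else -1) * p s)"

text \<open>F_max(A; rho), where the state rho enters only through its syndrome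
  distribution q = p_rho, whose transform gives mu_rho = hat q.\<close>
definition Fmax :: "bit^'n^'n::finite \<Rightarrow> (bit^'n \<Rightarrow> real) \<Rightarrow> real" where
  "Fmax A q = Sup {p 0 | p. is_distr p \<and> (\<forall>i. fhat p (column i A) = fhat q (column i A))}"

end

theory Submission
  imports Defs
begin

text \<open>Since \<open>\<mu>(a\<^sub>i) = 2 p{s. a\<^sub>i\<cdot>s = 0} - 1\<close>, every feasible \<open>p\<close> has
  \<open>p(0) \<le> p{s. a\<^sub>i\<cdot>s = 0} = (1 + \<mu>(a\<^sub>i))/2\<close> for all \<open>i\<close>, so \<open>Fmax\<close> is at most the minimum of
  these values. The minimum is attained: the linear bijection \<open>s \<mapsto> A\<^sup>T s\<close> turns the constraints
  into prescribed marginals of the coordinates, and a mixture of the point mass at \<open>0\<close> with a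
  product distribution realises them. The minimum of the empirical means is then \<open>\<epsilon>\<close>-close to
  \<open>Fmax\<close> whenever each empirical mean is \<open>\<epsilon>\<close>-close to its expectation. By Hoeffding's inequality
  this fails for a fixed \<open>i\<close> with probability at most \<open>2 exp(-2 m\<^sub>i \<epsilon>\<^sup>2) \<le> \<delta>/n\<close>, and a union
  bound over \<open>i\<close> concludes.\<close>

lemma UNIV_bit: "(UNIV :: bit set) = {0, 1}"
  using bit_not_zero_iff by blast

instance bit :: finite
  by standard (simp add: UNIV_bit)

lemma sum_prod_vec_nth:
  fixes f :: "'n::finite \<Rightarrow> 'a \<Rightarrow> 'c::comm_semiring_1"
  assumes "\<And>i. finite (S i)"
  shows "(\<Sum>t | \<forall>i. t $ i \<in> S i. \<Prod>i\<in>UNIV. f i (t $ i)) = (\<Prod>i\<in>UNIV. \<Sum>b\<in>S i. f i b)"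
proof -
  have "(\<Prod>i\<in>UNIV. \<Sum>b\<in>S i. f i b) = (\<Sum>g\<in>PiE UNIV S. \<Prod>i\<in>UNIV. f i (g i))"
    using assms by (intro prod_sum_PiE) auto
  also have "\<dots> = (\<Sum>t | \<forall>i. t $ i \<in> S i. \<Prod>i\<in>UNIV. f i (t $ i))"
    by (rule sum.reindex_bij_witness[where i = vec_nth and j = vec_lambda]) (auto simp: PiE_UNIV_domain)
  finally show ?thesis ..
qed

lemma fhat_eq_hyperplane_sum:
  "fhat p u = 2 * sum p {s. dot2 u s = 0} - sum p UNIV"
proof -
  have "sum p UNIV = sum p {s. dot2 u s = 0} + sum p {s. dot2 u s \<noteq> 0}"
    by (subst sum.union_disjoint[symmetric]) (auto intro: sum.cong)
  moreover have "fhat p u = (\<Sum>s\<in>UNIV. if dot2 u s = 0 then p s else - p s)"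
    unfolding fhat_def by (intro sum.cong) auto
  moreover have "\<dots> = sum p {s. dot2 u s = 0} - sum p {s. dot2 u s \<noteq> 0}"
    by (simp add: sum.If_cases sum_negf Compl_eq)
  ultimately show ?thesis by simp
qed

lemma abs_fhat_le_1:
  assumes "is_distr p"
  shows "\<bar>fhat p u\<bar> \<le> 1"
proof -
  have "\<bar>fhat p u\<bar> \<le> (\<Sum>s\<in>UNIV. \<bar>(if dot2 u s = 0 then 1 else -1) * p s\<bar>)"
    unfolding fhat_def by (rule sum_abs)
  also have "\<dots> = sum p UNIV"
    using assms unfolding is_distr_def by (intro sum.cong) auto
  finally show ?thesis
    using assms unfolding is_distr_def by simp
qed

lemma dot2_column: "dot2 (column i A) s = (transpose A *v s) $ i"
  unfolding dot2_def column_def transpose_def matrix_vector_mult_def by simp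

definition bernoulli_product :: "('n::finite \<Rightarrow> real) \<Rightarrow> bit^'n \<Rightarrow> real" where
  "bernoulli_product \<beta> t = (\<Prod>i\<in>UNIV. if t $ i = 0 then \<beta> i else 1 - \<beta> i)"

lemma sum_bernoulli_product_zero_on:
  "sum (bernoulli_product \<beta>) {t. \<forall>j\<in>J. t $ j = 0} = (\<Prod>j\<in>J. \<beta> j)"
proof -
  define S where "S i = (if i \<in> J then {0} else UNIV :: bit set)" for i
  have "{t. \<forall>j\<in>J. t $ j = 0} = {t. \<forall>i. t $ i \<in> S i}"
    unfolding S_def by auto
  then have "sum (bernoulli_product \<beta>) {t. \<forall>j\<in>J. t $ j = 0}
      = (\<Prod>i\<in>UNIV. \<Sum>b\<in>S i. if b = 0 then \<beta> i else 1 - \<beta> i)"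
    unfolding bernoulli_product_def by (simp only:) (rule sum_prod_vec_nth, simp)
  also have "\<dots> = (\<Prod>i\<in>UNIV. if i \<in> J then \<beta> i else 1)"
    unfolding S_def UNIV_bit by (intro prod.cong) auto
  also have "\<dots> = (\<Prod>j\<in>J. \<beta> j)"
    by (simp add: prod.If_cases Int_absorb1)
  finally show ?thesis .
qed

lemma bernoulli_product_nonneg:
  assumes "\<And>i. 0 \<le> \<beta> i" "\<And>i. \<beta> i \<le> 1"
  shows "0 \<le> bernoulli_product \<beta> t"
  unfolding bernoulli_product_def using assms by (intro prod_nonneg) auto

lemma exists_distr_zero_marginals:
  fixes \<alpha> :: "'n::finite \<Rightarrow> real"
  assumes "\<And>i. 0 \<le> \<alpha> i" "\<And>i. \<alpha> i \<le> 1"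
  shows "\<exists>p. is_distr p \<and> p 0 = (MIN i. \<alpha> i) \<and> (\<forall>j. sum p {t. t $ j = 0} = \<alpha> j)"
proof -
  define c where "c = (MIN i. \<alpha> i)"
  have "c \<in> range \<alpha>"
    unfolding c_def by (rule Min_in) auto
  then obtain k where k: "\<alpha> k = c"
    by auto
  have c_le: "c \<le> \<alpha> i" for i
    unfolding c_def by simp
  txt \<open>With probability \<open>c\<close> take \<open>0\<close>, otherwise independent coordinates with \<open>t\<^sub>i = 0\<close> with
    probability \<open>\<beta> i\<close>. As \<open>\<beta> k = 0\<close>, the product part puts no mass on \<open>0\<close>. If \<open>c = 1\<close>, then
    \<open>\<beta> = 0\<close> by division by zero, harmlessly, since the product part has weight \<open>0\<close>.\<close>
  define \<beta> where "\<beta> i = (\<alpha> i - c) / (1 - c)" for i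
  define p where "p t = (if t = 0 then c else 0) + (1 - c) * bernoulli_product \<beta> t" for t
  have c01: "0 \<le> c" "c \<le> 1"
    using assms[of k] k by auto
  have \<beta>01: "0 \<le> \<beta> i" "\<beta> i \<le> 1" for i
    using assms[of i] c_le[of i] c01 unfolding \<beta>_def by (auto simp: divide_le_eq_1)
  have sum_p: "sum p {t. \<forall>j\<in>J. t $ j = 0} = c + (1 - c) * (\<Prod>j\<in>J. \<beta> j)" for J
    unfolding p_def by (simp add: sum.distrib sum_distrib_left[symmetric] sum_bernoulli_product_zero_on)
  have "bernoulli_product \<beta> 0 = 0"
    unfolding bernoulli_product_def \<beta>_def using k by (intro prod_zero) auto
  then have "p 0 = c"
    unfolding p_def by simp
  moreover have "is_distr p"
    unfolding is_distr_def p_def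
    using sum_p[of "{}"] c01 bernoulli_product_nonneg[of \<beta>, OF \<beta>01] by (auto simp: p_def)
  moreover have "sum p {t. t $ j = 0} = \<alpha> j" for j
    using sum_p[of "{j}"] c_le[of j] assms(2)[of j] unfolding \<beta>_def
    by (cases "c = 1") auto
  ultimately show ?thesis
    unfolding c_def by blast
qed

lemma bij_transpose_matrix_vector_mult:
  fixes A :: "'a::field^'n::finite^'n"
  assumes "invertible A"
  shows "bij ((*v) (transpose A))"
proof -
  have "invertible (transpose A)"
    using assms left_invertible_transpose right_invertible_transpose
    unfolding invertible_def by (metis matrix_left_right_inverse)
  then show ?thesis
    by (simp add: invertible_eq_bij)
qed

lemma sum_vimage_bij:
  assumes "bij f"
  shows "sum (g \<circ> f) (f -` T) = sum g T"
proof -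
  have "bij_betw f (f -` T) T"
    using bij_is_inj[OF assms] bij_is_surj[OF assms]
    by (auto simp: bij_betw_def surj_image_vimage_eq intro: inj_on_subset)
  then show ?thesis
    by (rule sum.reindex_bij_betw[unfolded comp_def[symmetric]])
qed

lemma is_distr_comp_bij:
  assumes "is_distr p" "bij f"
  shows "is_distr (p \<circ> f)"
  using assms sum_vimage_bij[of f p UNIV] unfolding is_distr_def by simp

lemma distr_zero_le_hyperplane_sum:
  assumes "is_distr p"
  shows "p 0 \<le> sum p {s. dot2 u s = 0}"
  using assms by (intro member_le_sum) (auto simp: is_distr_def dot2_def)

lemma Fmax_eq_Min:
  fixes A :: "bit^'n^'n::finite"
  assumes "invertible A" "is_distr q"
  shows "Fmax A q = (MIN i. (1 + fhat q (column i A)) / 2)"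
proof -
  define \<alpha> where "\<alpha> i = (1 + fhat q (column i A)) / 2" for i
  define F where "F = {p 0 | p. is_distr p \<and> (\<forall>i. fhat p (column i A) = fhat q (column i A))}"
  have constraint_iff: "fhat p (column i A) = fhat q (column i A)
      \<longleftrightarrow> sum p {s. dot2 (column i A) s = 0} = \<alpha> i" if "is_distr p" for p i
    using that assms(2) by (simp add: fhat_eq_hyperplane_sum is_distr_def \<alpha>_def)
  have "0 \<le> \<alpha> i" "\<alpha> i \<le> 1" for i
    using abs_fhat_le_1[OF assms(2), of "column i A"] unfolding \<alpha>_def by auto
  then obtain p where p: "is_distr p" "p 0 = (MIN i. \<alpha> i)" "\<And>j. sum p {t. t $ j = 0} = \<alpha> j"
    using exists_distr_zero_marginals[of \<alpha>] by blast
  define L where "L = (*v) (transpose A)"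
  have "bij L"
    unfolding L_def using assms(1) by (rule bij_transpose_matrix_vector_mult)
  have "{s. dot2 (column i A) s = 0} = L -` {t. t $ i = 0}" for i
    unfolding L_def dot2_column by auto
  then have "sum (p \<circ> L) {s. dot2 (column i A) s = 0} = \<alpha> i" for i
    by (simp only: sum_vimage_bij[OF \<open>bij L\<close>] p(3))
  moreover have "is_distr (p \<circ> L)"
    using p(1) \<open>bij L\<close> by (rule is_distr_comp_bij)
  ultimately have "\<forall>i. fhat (p \<circ> L) (column i A) = fhat q (column i A)"
    using constraint_iff by blast
  moreover have "(p \<circ> L) 0 = (MIN i. \<alpha> i)"
    unfolding L_def using p(2) by simp
  ultimately have "(MIN i. \<alpha> i) \<in> F"
    unfolding F_def mem_Collect_eq using \<open>is_distr (p \<circ> L)\<close> by metis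
  moreover have "x \<le> (MIN i. \<alpha> i)" if "x \<in> F" for x
  proof -
    from that obtain p' where "x = p' 0" "is_distr p'"
      and "\<forall>i. sum p' {s. dot2 (column i A) s = 0} = \<alpha> i"
      unfolding F_def using constraint_iff by blast
    then show ?thesis
      using distr_zero_le_hyperplane_sum[of p'] by (simp, metis)
  qed
  ultimately show ?thesis
    unfolding Fmax_def F_def[symmetric] \<alpha>_def[symmetric] by (rule cSup_eq_maximum)
qed

text \<open>Unlike \<open>Hoeffding_ineq_iid\<close>, only equal means are assumed, not equal distributions.\<close>

lemma (in prob_space) Hoeffding_mean_abs_ge:
  fixes X :: "'i \<Rightarrow> 'a \<Rightarrow> real" and \<epsilon> :: real
  assumes "finite I" "indep_vars (\<lambda>_. borel) X I" "a < b"
    and "\<And>i. i \<in> I \<Longrightarrow> AE \<omega> in M. X i \<omega> \<in> {a..b}"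
    and "\<And>i. i \<in> I \<Longrightarrow> expectation (X i) = \<mu>"
    and "0 \<le> \<epsilon>"
  shows "prob {\<omega> \<in> space M. \<epsilon> \<le> \<bar>(\<Sum>i\<in>I. X i \<omega>) / real (card I) - \<mu>\<bar>}
           \<le> 2 * exp (- 2 * real (card I) * \<epsilon>\<^sup>2 / (b - a)\<^sup>2)"
proof (cases "I = {}")
  case True
  then show ?thesis
    by (auto intro: order_trans[OF prob_le_1])
next
  case False
  interpret Hoeffding_ineq M I X "\<lambda>_. a" "\<lambda>_. b" "\<Sum>i\<in>I. expectation (X i)"
    by unfold_locales (use assms in auto)
  define n where "n = real (card I)"
  have "0 < n"
    unfolding n_def using False assms(1) by (simp add: card_gt_0_iff)
  have "{\<omega> \<in> space M. \<epsilon> \<le> \<bar>(\<Sum>i\<in>I. X i \<omega>) / n - \<mu>\<bar>}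
      = {\<omega> \<in> space M. \<epsilon> * n \<le> \<bar>(\<Sum>i\<in>I. X i \<omega>) - (\<Sum>i\<in>I. expectation (X i))\<bar>}"
    using \<open>0 < n\<close> assms(5) unfolding n_def
    by (intro Collect_cong conj_cong refl) (auto simp: field_simps)
  also have "prob \<dots> \<le> 2 * exp (- 2 * (\<epsilon> * n)\<^sup>2 / (\<Sum>i\<in>I. (b - a)\<^sup>2))"
    using \<open>0 < n\<close> assms(3,6) by (intro Hoeffding_ineq_abs_ge) (auto simp: n_def)
  also have "- 2 * (\<epsilon> * n)\<^sup>2 / (\<Sum>i\<in>I. (b - a)\<^sup>2) = - 2 * n * \<epsilon>\<^sup>2 / (b - a)\<^sup>2"
    using \<open>0 < n\<close> unfolding n_def by (simp add: power2_eq_square)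
  finally show ?thesis
    unfolding n_def .
qed

lemma (in prob_space) Hoeffding_row_mean_abs_ge:
  fixes Y :: "'i \<Rightarrow> nat \<Rightarrow> 'a \<Rightarrow> real" and \<epsilon> :: real
  assumes "indep_vars (\<lambda>_. borel) (\<lambda>(i, j). Y i j) ({i} \<times> {1..k})"
    and "\<And>j \<omega>. j \<in> {1..k} \<Longrightarrow> \<omega> \<in> space M \<Longrightarrow> Y i j \<omega> \<in> {0..1}"
    and "\<And>j. j \<in> {1..k} \<Longrightarrow> expectation (Y i j) = \<mu>"
    and "0 \<le> \<epsilon>"
  shows "prob {\<omega> \<in> space M. \<epsilon> \<le> \<bar>(\<Sum>j = 1..k. Y i j \<omega>) / real k - \<mu>\<bar>}
           \<le> 2 * exp (- 2 * real k * \<epsilon>\<^sup>2)"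
proof -
  let ?X = "\<lambda>(i, j). Y i j" and ?I = "Pair i ` {1..k}"
  have row: "{i} \<times> {1..k} = ?I"
    by auto
  have "prob {\<omega> \<in> space M. \<epsilon> \<le> \<bar>(\<Sum>x\<in>?I. ?X x \<omega>) / real (card ?I) - \<mu>\<bar>}
      \<le> 2 * exp (- 2 * real (card ?I) * \<epsilon>\<^sup>2 / (1 - 0)\<^sup>2)"
    using assms unfolding row by (intro Hoeffding_mean_abs_ge) (auto intro!: AE_I2)
  moreover have "card ?I = k"
    by (simp add: card_image inj_on_def)
  moreover have "(\<Sum>x\<in>?I. ?X x \<omega>) = (\<Sum>j = 1..k. Y i j \<omega>)" for \<omega>
    by (simp add: sum.reindex inj_on_def)
  ultimately show ?thesis
    by simp
qed

lemma two_exp_le_of_sample_size: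
  fixes N \<delta> \<epsilon> :: real and k :: nat
  assumes "0 < N" "0 < \<delta>" "0 < \<epsilon>"
    and "real k \<ge> real_of_int \<lceil>ln (2 * N / \<delta>) / (2 * \<epsilon>\<^sup>2)\<rceil>"
  shows "2 * exp (- 2 * real k * \<epsilon>\<^sup>2) \<le> \<delta> / N"
proof -
  have "ln (2 * N / \<delta>) / (2 * \<epsilon>\<^sup>2) \<le> real k"
    using assms(4) le_of_int_ceiling order_trans by blast
  then have "ln (2 * N / \<delta>) \<le> 2 * real k * \<epsilon>\<^sup>2"
    using assms(3) by (simp add: divide_le_eq mult_ac)
  then have "exp (- 2 * real k * \<epsilon>\<^sup>2) \<le> exp (- ln (2 * N / \<delta>))"
    by simp
  also have "\<dots> = \<delta> / (2 * N)"
    using assms(1,2) by (simp add: exp_minus)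
  finally show ?thesis
    by (simp add: field_simps)
qed

lemma (in prob_space) prob_ge_of_union_bound:
  fixes d :: real
  assumes "finite I" "G \<in> events" "\<And>i. i \<in> I \<Longrightarrow> B i \<in> events"
    and "\<And>i. i \<in> I \<Longrightarrow> prob (B i) \<le> d"
    and "space M - (\<Union>i\<in>I. B i) \<subseteq> G"
  shows "1 - card I * d \<le> prob G"
proof -
  have "prob (\<Union>i\<in>I. B i) \<le> (\<Sum>i\<in>I. prob (B i))"
    using assms(1,3) by (intro finite_measure_subadditive_finite) auto
  also have "\<dots> \<le> card I * d"
    using sum_mono[OF assms(4)] by simp
  finally have "1 - card I * d \<le> prob (space M - (\<Union>i\<in>I. B i))"
    using assms(1,3) by (subst prob_compl) (auto intro: sets.finite_UN)
  also have "\<dots> \<le> prob G"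
    using assms(5,2) by (rule finite_measure_mono)
  finally show ?thesis .
qed

lemma Min_le_Min_add:
  fixes f g :: "'i::finite \<Rightarrow> real"
  assumes "\<And>i. f i \<le> g i + e"
  shows "(MIN i. f i) \<le> (MIN i. g i) + e"
proof -
  have "(MIN i. g i) \<in> range g"
    by (rule Min_in) auto
  then obtain k where "g k = (MIN i. g i)"
    by (metis rangeE)
  moreover have "(MIN i. f i) \<le> f k"
    by simp
  ultimately show ?thesis
    using assms[of k] by linarith
qed

lemma abs_Min_diff_le:
  fixes f g :: "'i::finite \<Rightarrow> real"
  assumes "\<And>i. \<bar>f i - g i\<bar> \<le> e"
  shows "\<bar>(MIN i. f i) - (MIN i. g i)\<bar> \<le> e"
  using Min_le_Min_add[of f g e] Min_le_Min_add[of g f e] assms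
  by (simp add: abs_le_iff algebra_simps)

lemma (in prob_space) prob_abs_Min_deviation_ge:
  fixes F :: "'i::finite \<Rightarrow> 'a \<Rightarrow> real" and \<alpha> :: "'i \<Rightarrow> real"
    and d :: real
  assumes "\<And>i. F i \<in> borel_measurable M"
    and "\<And>i. prob {\<omega> \<in> space M. \<epsilon> \<le> \<bar>F i \<omega> - \<alpha> i\<bar>} \<le> d"
  shows "1 - CARD('i) * d \<le> prob {\<omega> \<in> space M. \<bar>(MIN i. F i \<omega>) - (MIN i. \<alpha> i)\<bar> \<le> \<epsilon>}"
proof (rule prob_ge_of_union_bound[where B = "\<lambda>i. {\<omega> \<in> space M. \<epsilon> \<le> \<bar>F i \<omega> - \<alpha> i\<bar>}"])
  note [measurable] = assms(1)
  show "{\<omega> \<in> space M. \<bar>(MIN i. F i \<omega>) - (MIN i. \<alpha> i)\<bar> \<le> \<epsilon>} \<in> events"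
    by measurable
  show "{\<omega> \<in> space M. \<epsilon> \<le> \<bar>F i \<omega> - \<alpha> i\<bar>} \<in> events" for i
    by measurable
  show "space M - (\<Union>i\<in>UNIV. {\<omega> \<in> space M. \<epsilon> \<le> \<bar>F i \<omega> - \<alpha> i\<bar>})
      \<subseteq> {\<omega> \<in> space M. \<bar>(MIN i. F i \<omega>) - (MIN i. \<alpha> i)\<bar> \<le> \<epsilon>}"
  proof
    fix \<omega> assume \<omega>: "\<omega> \<in> space M - (\<Union>i\<in>UNIV. {\<omega> \<in> space M. \<epsilon> \<le> \<bar>F i \<omega> - \<alpha> i\<bar>})"
    then have "\<bar>F i \<omega> - \<alpha> i\<bar> \<le> \<epsilon>" for i
      by (auto simp: not_le less_imp_le)
    then show "\<omega> \<in> {\<omega> \<in> space M. \<bar>(MIN i. F i \<omega>) - (MIN i. \<alpha> i)\<bar> \<le> \<epsilon>}"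
      using \<omega> abs_Min_diff_le[of "\<lambda>i. F i \<omega>" \<alpha> \<epsilon>] by simp
  qed
qed (use assms(2) in simp_all)

theorem proposition3:
  fixes A :: "bit^'n^'n::finite"
    and q :: "bit^'n \<Rightarrow> real"
    and M :: "'w measure"
    and Y :: "'n \<Rightarrow> nat \<Rightarrow> 'w \<Rightarrow> real"
    and m :: "'n \<Rightarrow> nat"
    and \<epsilon> \<delta> :: real
  assumes "invertible A"
    and "is_distr q"
    and "\<epsilon> > 0" and "0 < \<delta>" and "\<delta> < 1"
    and "prob_space M"
    and "prob_space.indep_vars M (\<lambda>_. borel) (\<lambda>(i, j). Y i j) {(i, j). 1 \<le> j \<and> j \<le> m i}"
    and "\<And>i j \<omega>. 1 \<le> j \<Longrightarrow> j \<le> m i \<Longrightarrow> \<omega> \<in> space M \<Longrightarrow> Y i j \<omega> \<in> {0, 1}"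
    and "\<And>i j. 1 \<le> j \<Longrightarrow> j \<le> m i \<Longrightarrow>
           prob_space.expectation M (Y i j) = (1 + fhat q (column i A)) / 2"
    and "\<And>i. real (m i) \<ge> real_of_int \<lceil>ln (2 * real CARD('n) / \<delta>) / (2 * \<epsilon>\<^sup>2)\<rceil>"
  shows "measure M {\<omega> \<in> space M.
            \<bar>(MIN i. (\<Sum>j = 1..m i. Y i j \<omega>) / real (m i)) - Fmax A q\<bar> \<le> \<epsilon>} \<ge> 1 - \<delta>"
proof -
  interpret prob_space M by fact
  define \<alpha> where "\<alpha> i = (1 + fhat q (column i A)) / 2" for i
  define mean where "mean i \<omega> = (\<Sum>j = 1..m i. Y i j \<omega>) / real (m i)" for i \<omega>
  have "Y i j \<in> borel_measurable M" if "1 \<le> j" "j \<le> m i" for i j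
    using assms(7) that unfolding indep_vars_def by auto
  then have mean_measurable: "mean i \<in> borel_measurable M" for i
    unfolding mean_def by (intro borel_measurable_divide borel_measurable_sum) auto
  have "Y i j \<omega> \<in> {0..1}" if "j \<in> {1..m i}" "\<omega> \<in> space M" for i j \<omega>
    using assms(8)[of j i \<omega>] that by auto
  then have "prob {\<omega> \<in> space M. \<epsilon> \<le> \<bar>mean i \<omega> - \<alpha> i\<bar>} \<le> 2 * exp (- 2 * real (m i) * \<epsilon>\<^sup>2)" for i
    unfolding mean_def \<alpha>_def using assms(3,9)
    by (intro Hoeffding_row_mean_abs_ge indep_vars_subset[OF assms(7)]) auto
  also have "2 * exp (- 2 * real (m i) * \<epsilon>\<^sup>2) \<le> \<delta> / CARD('n)" for i
    using assms(3,4,10) by (intro two_exp_le_of_sample_size) auto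
  finally have "1 - CARD('n) * (\<delta> / CARD('n))
      \<le> prob {\<omega> \<in> space M. \<bar>(MIN i. mean i \<omega>) - (MIN i. \<alpha> i)\<bar> \<le> \<epsilon>}"
    by (intro prob_abs_Min_deviation_ge mean_measurable)
  then show ?thesis
    unfolding Fmax_eq_Min[OF assms(1,2)] mean_def \<alpha>_def by simp
qed

end
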